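(* Let $\langle-,-\rangle$ be a cyclic form on $C$. Then $\langle\mu(v_1,\dots,v_n),\mu(w_1,\dots,w_l)\rangle=0$ unless $\mathrm{Span}\{v_1,\dots,v_n,w_1,\dots,w_l\}=V$.
   Context: $k$ is a field of characteristic zero, $V$ a $k$-vector space of dimension $m\ge1$ in degree $0$, $A=\mathrm{Sym}(V)$, and $C=A^{\textup{!`}}$ the exterior coalgebra on $sV$ with elements $\mu(v_1,\dots,v_n)=sv_1\wedge\cdots\wedge sv_n$ (the vectors in each such expression taken linearly independent; $\mu()=e$ is the counit element), and coproduct $\triangle\mu(v_1,\dots,v_n)=\sum_{p=0}^n\sum_{\sigma\in Sh_{p,n-p}}\mathrm{sgn}(\sigma)\mu(v_{\sigma(1)},\dots,v_{\sigma(p)})\otimes\mu(v_{\sigma(p+1)},\dots,v_{\sigma(n)})$. A symmetric bilinear form of degree $-d$ on $C$ is $\langle-,-\rangle:C\otimes C\to k[d]$ with $\langle a,b\rangle=(-1)^{|a||b|}\langle b,a\rangle$; it is cyclic if $\sum\langle a,b^2\rangle b^1=\sum\langle a^1,b\rangle a^2$ for all $a,b$, with $\triangle(a)=\sum a^1\otimes a^2$, $\triangle(b)=\sum b^1\otimes b^2$. *)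

theory Defs
  imports "HOL-Analysis.Analysis"
begin

text \<open>Model: V = 'k^'n with 'n a finite linearly ordered index type (m = CARD('n) \<ge> 1).
  The exterior coalgebra C on sV is modelled by coefficient functions on the basis
  e_S = s e_{s_1} \<and> ... \<and> s e_{s_p} (S = {s_1 < ... < s_p} \<subseteq> 'n), i.e. C = 'n set \<Rightarrow> 'k;
  C \<otimes> C = ('n set \<times> 'n set) \<Rightarrow> 'k.  The degree of e_S is card S.\<close>

type_synonym ('k, 'n) coalg = "'n set \<Rightarrow> 'k"

definition basis_el :: "'n set \<Rightarrow> ('k::field, 'n) coalg" where
  "basis_el S = (\<lambda>T. if T = S then 1 else 0)"

text \<open>sign of the (p, n-p)-shuffle putting the elements of U first, then those of W\<close>
definition shuf_sign :: "'n::linorder set \<Rightarrow> 'n set \<Rightarrow> 'k::field" where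
  "shuf_sign U W = (- 1) ^ card {(u, w). u \<in> U \<and> w \<in> W \<and> w < u}"

definition coprod :: "('k::field, 'n::{finite,linorder}) coalg \<Rightarrow> ('n set \<times> 'n set \<Rightarrow> 'k)" where
  "coprod a = (\<lambda>(U, W). if U \<inter> W = {} then shuf_sign U W * a (U \<union> W) else 0)"

text \<open>mu(v_1,...,v_n) = s v_1 \<and> ... \<and> s v_n expanded in the basis (coefficients are minors)\<close>
definition mu :: "('k::field ^ 'n::{finite,linorder}) list \<Rightarrow> ('k, 'n) coalg" where
  "mu vs = (\<lambda>S. if card S = length vs then
      (\<Sum>\<sigma> | \<sigma> permutes {..<length vs}.
          of_int (sign \<sigma>) * (\<Prod>j<length vs. (vs ! j) $ (sorted_list_of_set S ! \<sigma> j)))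
    else 0)"

definition homogeneous :: "nat \<Rightarrow> ('k::field, 'n) coalg \<Rightarrow> bool" where
  "homogeneous p a \<longleftrightarrow> (\<forall>S. a S \<noteq> 0 \<longrightarrow> card S = p)"

definition bilinear_form :: "(('k::field, 'n::finite) coalg \<Rightarrow> ('k, 'n) coalg \<Rightarrow> 'k) \<Rightarrow> bool" where
  "bilinear_form f \<longleftrightarrow>
     (\<forall>a a' b. f (\<lambda>S. a S + a' S) b = f a b + f a' b) \<and>
     (\<forall>c a b. f (\<lambda>S. c * a S) b = c * f a b) \<and>
     (\<forall>a b b'. f a (\<lambda>S. b S + b' S) = f a b + f a b') \<and>
     (\<forall>c a b. f a (\<lambda>S. c * b S) = c * f a b)"

text \<open>symmetric bilinear form of degree -d: nonzero only on pairs of total degree d,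
  graded symmetric with sign (-1)^(|a||b|)\<close>
definition symmetric_form :: "int \<Rightarrow> (('k::field, 'n::finite) coalg \<Rightarrow> ('k, 'n) coalg \<Rightarrow> 'k) \<Rightarrow> bool" where
  "symmetric_form d f \<longleftrightarrow> bilinear_form f \<and>
     (\<forall>p q a b. homogeneous p a \<longrightarrow> homogeneous q b \<longrightarrow> int p + int q \<noteq> d \<longrightarrow> f a b = 0) \<and>
     (\<forall>p q a b. homogeneous p a \<longrightarrow> homogeneous q b \<longrightarrow> f a b = (- 1) ^ (p * q) * f b a)"

text \<open>cyclicity: sum <a, b2> b1 = sum <a1, b> a2, Sweedler sums written in the basis e_U \<otimes> e_W\<close>
definition cyclic_form :: "(('k::field, 'n::{finite,linorder}) coalg \<Rightarrow> ('k, 'n) coalg \<Rightarrow> 'k) \<Rightarrow> bool" where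
  "cyclic_form f \<longleftrightarrow> (\<forall>a b.
     (\<lambda>X. \<Sum>W\<in>UNIV. coprod b (X, W) * f a (basis_el W)) =
     (\<lambda>X. \<Sum>U\<in>UNIV. coprod a (U, X) * f (basis_el U) b))"

end

theory Submission
  imports Defs
begin

text \<open>Pick a linear functional \<open>c\<close> vanishing on all \<open>v\<^sub>i\<close> and \<open>w\<^sub>j\<close>, and a vector \<open>u\<close> with
  \<open>c(u) = 1\<close>.  Apply \<open>c\<close> to the degree-one tensor factor on both sides of the cyclicity identity
  for \<open>a = \<mu>(v\<^sub>1,\<dots>,v\<^sub>n,u)\<close> and \<open>b = \<mu>(w\<^sub>1,\<dots>,w\<^sub>l)\<close>.  Contracting \<open>\<triangle>b\<close> with \<open>c\<close> gives zero, since
  \<open>c\<close> kills every \<open>w\<^sub>j\<close>; contracting \<open>\<triangle>a\<close> with \<open>c\<close> leaves only the term \<open>c(u) \<mu>(v\<^sub>1,\<dots>,v\<^sub>n)\<close>.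
  Hence \<open>\<langle>\<mu>(v\<^sub>1,\<dots>,v\<^sub>n), b\<rangle> = 0\<close>.  In coordinates both contractions are Laplace expansions of
  the minors defining \<open>\<mu>\<close>.\<close>

text \<open>\<open>det_pairing xs \<phi>s\<close> is the determinant \<open>det (\<phi>\<^sub>k(x\<^sub>j))\<close>; for the coordinate functionals
  of a set \<open>S\<close> it is the coefficient of \<open>\<mu> xs\<close> at \<open>e\<^sub>S\<close>.\<close>

definition det_pairing :: "('k::field ^ 'n::finite) list \<Rightarrow> (('k ^ 'n) \<Rightarrow> 'k) list \<Rightarrow> 'k" where
  "det_pairing xs \<phi>s = (\<Sum>\<sigma> | \<sigma> permutes {..<length xs}.
      of_int (sign \<sigma>) * (\<Prod>k<length xs. (\<phi>s ! k) (xs ! \<sigma> k)))"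

lemma det_pairing_permute:
  fixes xs :: "('k::field ^ 'n::finite) list"
  assumes \<tau>: "\<tau> permutes {..<length xs}"
  shows "det_pairing xs (map (\<lambda>k. \<phi>s ! \<tau> k) [0..<length xs]) = of_int (sign \<tau>) * det_pairing xs \<phi>s"
proof -
  let ?n = "length xs"
  have "det_pairing xs (map (\<lambda>k. \<phi>s ! \<tau> k) [0..<?n]) =
     (\<Sum>\<sigma> | \<sigma> permutes {..<?n}. of_int (sign \<sigma>) * (\<Prod>k<?n. (\<phi>s ! \<tau> k) (xs ! \<sigma> k)))"
    unfolding det_pairing_def by (intro sum.cong refl arg_cong2[where f="(*)"] prod.cong) auto
  also have "\<dots> = (\<Sum>\<sigma> | \<sigma> permutes {..<?n}.
      of_int (sign \<sigma>) * (\<Prod>k<?n. (\<phi>s ! k) (xs ! \<sigma> (inv \<tau> k))))"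
  proof (intro sum.cong refl arg_cong2[where f="(*)"])
    fix \<sigma>
    have "bij_betw \<tau> {..<?n} {..<?n}" using \<tau> permutes_imp_bij by blast
    from prod.reindex_bij_betw[OF this, of "\<lambda>k. (\<phi>s ! k) (xs ! \<sigma> (inv \<tau> k))"]
    show "(\<Prod>k<?n. (\<phi>s ! \<tau> k) (xs ! \<sigma> k)) = (\<Prod>k<?n. (\<phi>s ! k) (xs ! \<sigma> (inv \<tau> k)))"
      using permutes_inverses(2)[OF \<tau>] by simp
  qed
  also have "\<dots> = (\<Sum>\<sigma> | \<sigma> permutes {..<?n}.
      of_int (sign (\<sigma> \<circ> \<tau>)) * (\<Prod>k<?n. (\<phi>s ! k) (xs ! (\<sigma> \<circ> \<tau>) (inv \<tau> k))))"
    by (rule sum_permutations_compose_right[OF \<tau>])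
  also have "\<dots> = (\<Sum>\<sigma> | \<sigma> permutes {..<?n}.
      of_int (sign \<tau>) * (of_int (sign \<sigma>) * (\<Prod>k<?n. (\<phi>s ! k) (xs ! \<sigma> k))))"
  proof (intro sum.cong refl)
    fix \<sigma> assume "\<sigma> \<in> {\<sigma>. \<sigma> permutes {..<?n}}"
    then have "permutation \<sigma>" using permutation_permutes by blast
    moreover have "permutation \<tau>" using \<tau> permutation_permutes by blast
    ultimately have "sign (\<sigma> \<circ> \<tau>) = sign \<sigma> * sign \<tau>" by (rule sign_compose)
    then show "of_int (sign (\<sigma> \<circ> \<tau>)) * (\<Prod>k<?n. (\<phi>s ! k) (xs ! (\<sigma> \<circ> \<tau>) (inv \<tau> k))) =
       of_int (sign \<tau>) * (of_int (sign \<sigma>) * (\<Prod>k<?n. (\<phi>s ! k) (xs ! \<sigma> k)))"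
      using permutes_inverses(1)[OF \<tau>] by simp
  qed
  also have "\<dots> = of_int (sign \<tau>) * det_pairing xs \<phi>s"
    unfolding det_pairing_def by (simp add: sum_distrib_left)
  finally show ?thesis .
qed

lemma det_pairing_swap_adjacent:
  fixes xs :: "('k::field ^ 'n::finite) list"
  assumes "length (A @ [\<phi>, \<psi>] @ B) = length xs"
  shows "det_pairing xs (A @ [\<phi>, \<psi>] @ B) = - det_pairing xs (A @ [\<psi>, \<phi>] @ B)"
proof -
  let ?n = "length xs" and ?t = "Transposition.transpose (length A) (Suc (length A))"
  have \<tau>: "?t permutes {..<?n}" using assms by (intro permutes_swap_id) auto
  have "map (\<lambda>k. (A @ [\<psi>, \<phi>] @ B) ! ?t k) [0..<?n] = A @ [\<phi>, \<psi>] @ B"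
  proof (intro nth_equalityI)
    fix i assume i: "i < length (map (\<lambda>k. (A @ [\<psi>, \<phi>] @ B) ! ?t k) [0..<?n])"
    consider "i < length A" | "i = length A" | "i = Suc (length A)" | "i > Suc (length A)"
      by linarith
    then show "map (\<lambda>k. (A @ [\<psi>, \<phi>] @ B) ! ?t k) [0..<?n] ! i = (A @ [\<phi>, \<psi>] @ B) ! i"
      using assms i by cases (auto simp: nth_append transpose_apply_other nth_Cons')
  qed (use assms in simp)
  then show ?thesis
    using det_pairing_permute[OF \<tau>, of "A @ [\<psi>, \<phi>] @ B"] by (simp add: sign_swap_id)
qed

lemma det_pairing_move_last:
  fixes xs :: "('k::field ^ 'n::finite) list"
  assumes "length (A @ [\<phi>] @ B) = length xs"
  shows "det_pairing xs (A @ [\<phi>] @ B) = (-1) ^ length B * det_pairing xs (A @ B @ [\<phi>])"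
  using assms
proof (induction B arbitrary: A)
  case Nil
  then show ?case by simp
next
  case (Cons \<psi> B)
  have "det_pairing xs (A @ [\<phi>] @ \<psi> # B) = - det_pairing xs ((A @ [\<psi>]) @ [\<phi>] @ B)"
    using det_pairing_swap_adjacent[of A \<phi> \<psi> B xs] Cons.prems by simp
  also have "\<dots> = - ((-1) ^ length B * det_pairing xs ((A @ [\<psi>]) @ B @ [\<phi>]))"
    using Cons.IH[of "A @ [\<psi>]"] Cons.prems by simp
  finally show ?case by simp
qed

lemma det_pairing_repeated_last:
  fixes xs :: "('k::field_char_0 ^ 'n::finite) list"
  assumes "length (L @ [\<phi>]) = length xs" and "\<phi> \<in> set L"
  shows "det_pairing xs (L @ [\<phi>]) = 0"
proof -
  obtain A B where L: "L = A @ [\<phi>] @ B" using assms(2) by (metis append_Cons append_Nil split_list)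
  have "det_pairing xs (A @ [\<phi>] @ (B @ [\<phi>])) =
      (-1) ^ length (B @ [\<phi>]) * det_pairing xs (A @ (B @ [\<phi>]) @ [\<phi>])"
    by (rule det_pairing_move_last) (use assms L in simp)
  moreover have "det_pairing xs ((A @ B) @ [\<phi>, \<phi>] @ []) = - det_pairing xs ((A @ B) @ [\<phi>, \<phi>] @ [])"
    by (rule det_pairing_swap_adjacent) (use assms L in simp)
  ultimately show ?thesis using L by simp
qed

lemma det_pairing_sum_last:
  fixes xs :: "('k::field ^ 'n::finite) list"
  assumes "length L + 1 = length xs"
  shows "det_pairing xs (L @ [\<lambda>v. \<Sum>i\<in>I. c i * \<phi> i v]) = (\<Sum>i\<in>I. c i * det_pairing xs (L @ [\<phi> i]))"
proof -
  have "(\<Prod>k<length xs. ((L @ [\<psi>]) ! k) (xs ! \<sigma> k)) =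
      (\<Prod>k<length L. (L ! k) (xs ! \<sigma> k)) * \<psi> (xs ! \<sigma> (length L))" for \<psi> \<sigma>
    using assms[symmetric] by (simp add: nth_append)
  then show ?thesis unfolding det_pairing_def
    by (simp add: sum_distrib_left sum_distrib_right mult_ac sum.swap[where A=I])
qed

lemma det_pairing_vanishing_last:
  fixes xs :: "('k::field ^ 'n::finite) list"
  assumes "length L + 1 = length xs" and "\<And>x. x \<in> set xs \<Longrightarrow> \<phi> x = 0"
  shows "det_pairing xs (L @ [\<phi>]) = 0"
  unfolding det_pairing_def
proof (intro sum.neutral ballI)
  fix \<sigma> assume "\<sigma> \<in> {\<sigma>. \<sigma> permutes {..<length xs}}"
  then have "\<sigma> (length L) < length xs" using assms(1) permutes_in_image by fastforce
  then have "\<phi> (xs ! \<sigma> (length L)) = 0" using assms(2) nth_mem by blast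
  then show "of_int (sign \<sigma>) * (\<Prod>k<length xs. ((L @ [\<phi>]) ! k) (xs ! \<sigma> k)) = 0"
    using assms(1)[symmetric] by (simp add: nth_append)
qed

lemma det_pairing_snoc:
  fixes xs :: "('k::field ^ 'n::finite) list"
  assumes "length L = length xs" and "\<And>x. x \<in> set xs \<Longrightarrow> \<phi> x = 0"
  shows "det_pairing (xs @ [u]) (L @ [\<phi>]) = \<phi> u * det_pairing xs L"
proof -
  let ?m = "length xs"
  define F where "F = (\<lambda>\<sigma>. of_int (sign \<sigma>) * (\<Prod>k<Suc ?m. ((L @ [\<phi>]) ! k) ((xs @ [u]) ! \<sigma> k)))"
  have "det_pairing (xs @ [u]) (L @ [\<phi>]) = sum F {p. p permutes insert ?m {..<?m}}"
    unfolding det_pairing_def F_def by (simp add: lessThan_Suc)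
  also have "\<dots> = (\<Sum>b\<in>insert ?m {..<?m}. \<Sum>q | q permutes {..<?m}. F (Transposition.transpose ?m b \<circ> q))"
    by (rule sum_over_permutations_insert) auto
  also have "\<dots> = (\<Sum>q | q permutes {..<?m}. F q)"
  proof -
    have "(\<Sum>q | q permutes {..<?m}. F (Transposition.transpose ?m b \<circ> q)) = 0" if b: "b < ?m" for b
    proof (intro sum.neutral ballI)
      fix q assume "q \<in> {q. q permutes {..<?m}}"
      then have "(Transposition.transpose ?m b \<circ> q) ?m = b" by (simp add: permutes_def)
      moreover have "\<phi> (xs ! b) = 0" using b assms(2) nth_mem by blast
      ultimately show "F (Transposition.transpose ?m b \<circ> q) = 0"
        unfolding F_def using b assms(1) by (simp add: nth_append)
    qed
    then show ?thesis by simp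
  qed
  also have "\<dots> = (\<Sum>q | q permutes {..<?m}. \<phi> u * (of_int (sign q) * (\<Prod>k<?m. (L ! k) (xs ! q k))))"
  proof (intro sum.cong refl)
    fix q assume "q \<in> {q. q permutes {..<?m}}"
    then have q: "q permutes {..<?m}" by simp
    then have "\<And>k. k < ?m \<Longrightarrow> q k < ?m" using permutes_in_image by fastforce
    then have "(\<Prod>k<?m. ((L @ [\<phi>]) ! k) ((xs @ [u]) ! q k)) = (\<Prod>k<?m. (L ! k) (xs ! q k))"
      using assms(1) by (intro prod.cong) (auto simp: nth_append)
    moreover have "q ?m = ?m" using q by (simp add: permutes_def)
    ultimately show "F q = \<phi> u * (of_int (sign q) * (\<Prod>k<?m. (L ! k) (xs ! q k)))"
      unfolding F_def using assms(1) by (simp add: nth_append mult_ac)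
  qed
  also have "\<dots> = \<phi> u * det_pairing xs L"
    unfolding det_pairing_def by (simp add: sum_distrib_left)
  finally show ?thesis .
qed

definition coord :: "'n \<Rightarrow> ('k ^ 'n) \<Rightarrow> 'k" where
  "coord i = (\<lambda>v. v $ i)"

definition functional :: "('n \<Rightarrow> 'k::field) \<Rightarrow> 'k ^ 'n::finite \<Rightarrow> 'k" where
  "functional c v = (\<Sum>i\<in>UNIV. c i * v $ i)"

lemma functional_eq_sum_coord: "functional c = (\<lambda>v. \<Sum>i\<in>UNIV. c i * coord i v)"
  by (simp add: fun_eq_iff functional_def coord_def)

lemma mu_eq_det_pairing:
  "mu vs S = (if card S = length vs then det_pairing vs (map coord (sorted_list_of_set S)) else 0)"
proof (cases "card S = length vs")
  case True
  let ?n = "length vs" and ?L = "sorted_list_of_set S"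
  have "mu vs S = (\<Sum>\<sigma> | \<sigma> permutes {..<?n}. of_int (sign \<sigma>) * (\<Prod>j<?n. (vs ! j) $ (?L ! \<sigma> j)))"
    using True unfolding mu_def by simp
  also have "\<dots> = (\<Sum>\<sigma> | \<sigma> permutes {..<?n}. of_int (sign \<sigma>) * (\<Prod>k<?n. (vs ! inv \<sigma> k) $ (?L ! k)))"
  proof (intro sum.cong refl arg_cong2[where f="(*)"])
    fix \<sigma> assume "\<sigma> \<in> {\<sigma>. \<sigma> permutes {..<?n}}"
    then have \<sigma>: "\<sigma> permutes {..<?n}" by simp
    then have "bij_betw \<sigma> {..<?n} {..<?n}" using permutes_imp_bij by blast
    from prod.reindex_bij_betw[OF this, of "\<lambda>k. (vs ! inv \<sigma> k) $ (?L ! k)"]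
    show "(\<Prod>j<?n. (vs ! j) $ (?L ! \<sigma> j)) = (\<Prod>k<?n. (vs ! inv \<sigma> k) $ (?L ! k))"
      using permutes_inverses(2)[OF \<sigma>] by simp
  qed
  also have "\<dots> = (\<Sum>\<sigma> | \<sigma> permutes {..<?n}.
      of_int (sign (inv \<sigma>)) * (\<Prod>k<?n. (vs ! inv (inv \<sigma>) k) $ (?L ! k)))"
    by (rule sum_permutations_inverse)
  also have "\<dots> = det_pairing vs (map coord ?L)"
    unfolding det_pairing_def
  proof (intro sum.cong refl)
    fix \<sigma> assume "\<sigma> \<in> {\<sigma>. \<sigma> permutes {..<?n}}"
    then have \<sigma>: "\<sigma> permutes {..<?n}" by simp
    then have "permutation \<sigma>" using permutation_permutes by blast
    moreover have "inv (inv \<sigma>) = \<sigma>" using \<sigma> by (simp add: permutes_inv_inv)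
    ultimately show "of_int (sign (inv \<sigma>)) * (\<Prod>k<?n. (vs ! inv (inv \<sigma>) k) $ (?L ! k)) =
        of_int (sign \<sigma>) * (\<Prod>k<?n. (map coord ?L ! k) (vs ! \<sigma> k))"
      using True by (simp add: sign_inverse coord_def)
  qed
  finally show ?thesis using True by simp
qed (simp add: mu_def)

lemma sorted_list_of_set_split:
  fixes W :: "'n::linorder set"
  assumes "finite W" "i \<notin> W"
  shows "sorted_list_of_set (insert i W) =
      sorted_list_of_set {w\<in>W. w < i} @ [i] @ sorted_list_of_set {w\<in>W. i < w}"
    and "sorted_list_of_set W = sorted_list_of_set {w\<in>W. w < i} @ sorted_list_of_set {w\<in>W. i < w}"
proof -
  let ?A = "sorted_list_of_set {w\<in>W. w < i}" and ?B = "sorted_list_of_set {w\<in>W. i < w}"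
  have set_AB: "set ?A = {w\<in>W. w < i}" "set ?B = {w\<in>W. i < w}" using assms(1) by simp_all
  have sorted_AB: "sorted_wrt (<) ?A" "sorted_wrt (<) ?B" by (simp_all add: strict_sorted_list_of_set)
  show "sorted_list_of_set (insert i W) = ?A @ [i] @ ?B"
  proof (rule strict_sorted_equal)
    show "sorted_wrt (<) (?A @ [i] @ ?B)" using set_AB sorted_AB by (auto simp: sorted_wrt_append)
    show "set (sorted_list_of_set (insert i W)) = set (?A @ [i] @ ?B)"
      by (subst set_sorted_list_of_set) (use assms set_AB in auto)
  qed (rule strict_sorted_list_of_set)
  show "sorted_list_of_set W = ?A @ ?B"
  proof (rule strict_sorted_equal)
    show "sorted_wrt (<) (?A @ ?B)" using set_AB sorted_AB by (auto simp: sorted_wrt_append)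
    show "set (sorted_list_of_set W) = set (?A @ ?B)"
      using assms set_AB by (auto simp: not_less_iff_gr_or_eq)
  qed (rule strict_sorted_list_of_set)
qed

lemma card_less_plus_card_greater:
  fixes W :: "'n::linorder set"
  assumes "finite W" "i \<notin> W"
  shows "card {w\<in>W. w < i} + card {w\<in>W. i < w} = card W"
proof -
  have "W = {w\<in>W. w < i} \<union> {w\<in>W. i < w}" using assms(2) by (auto simp: not_less_iff_gr_or_eq)
  then have "card W = card ({w\<in>W. w < i} \<union> {w\<in>W. i < w})" by simp
  also have "\<dots> = card {w\<in>W. w < i} + card {w\<in>W. i < w}" by (rule card_Un_disjoint) (use assms in auto)
  finally show ?thesis by simp
qed

lemma mu_insert:
  fixes xs :: "('k::field ^ 'n::{finite,linorder}) list"
  assumes "i \<notin> W" "card (insert i W) = length xs"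
  shows "mu xs (insert i W) =
    (-1) ^ card {w\<in>W. i < w} * det_pairing xs (map coord (sorted_list_of_set W) @ [coord i])"
proof -
  let ?A = "sorted_list_of_set {w\<in>W. w < i}" and ?B = "sorted_list_of_set {w\<in>W. i < w}"
  have len: "length (map coord ?A @ [coord i] @ map coord ?B) = length xs"
    using assms card_less_plus_card_greater[of W i] by simp
  have "det_pairing xs (map coord ?A @ [coord i] @ map coord ?B) =
      (-1) ^ card {w\<in>W. i < w} * det_pairing xs (map coord ?A @ map coord ?B @ [coord i])"
    using det_pairing_move_last[OF len] by simp
  then show ?thesis
    using assms sorted_list_of_set_split[of W i] by (simp add: mu_eq_det_pairing)
qed

lemma shuf_sign_singleton_left: "shuf_sign {i} W = (-1) ^ card {w\<in>W. w < i}"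
proof -
  have "{(u, w). u \<in> {i} \<and> w \<in> W \<and> w < u} = (\<lambda>w. (i, w)) ` {w\<in>W. w < i}" by auto
  then show ?thesis by (simp add: shuf_sign_def card_image inj_on_def)
qed

lemma shuf_sign_singleton_right: "shuf_sign U {i} = (-1) ^ card {u\<in>U. i < u}"
proof -
  have "{(u, w). u \<in> U \<and> w \<in> {i} \<and> w < u} = (\<lambda>u. (u, i)) ` {u\<in>U. i < u}" by auto
  then show ?thesis by (simp add: shuf_sign_def card_image inj_on_def)
qed

definition contract_fst :: "('n \<Rightarrow> 'k::field) \<Rightarrow> ('n::finite set \<times> 'n set \<Rightarrow> 'k) \<Rightarrow> 'n set \<Rightarrow> 'k" where
  "contract_fst c t W = (\<Sum>i\<in>UNIV. c i * t ({i}, W))"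

definition contract_snd :: "('n \<Rightarrow> 'k::field) \<Rightarrow> ('n::finite set \<times> 'n set \<Rightarrow> 'k) \<Rightarrow> 'n set \<Rightarrow> 'k" where
  "contract_snd c t U = (\<Sum>i\<in>UNIV. c i * t (U, {i}))"

lemma contract_fst_coprod_mu_eq_0:
  fixes ws :: "('k::field_char_0 ^ 'n::{finite,linorder}) list"
  assumes "\<And>x. x \<in> set ws \<Longrightarrow> functional c x = 0"
  shows "contract_fst c (coprod (mu ws)) W = 0"
proof (cases "card W + 1 = length ws")
  case False
  then have "coprod (mu ws) ({i}, W) = 0" for i by (auto simp: coprod_def mu_def)
  then show ?thesis by (simp add: contract_fst_def)
next
  case True
  let ?L = "map coord (sorted_list_of_set W)"
  have term_i: "c i * coprod (mu ws) ({i}, W) = (-1) ^ card W * (c i * det_pairing ws (?L @ [coord i]))"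
    for i
  proof (cases "i \<in> W")
    case True
    then show ?thesis
      using det_pairing_repeated_last[of ?L "coord i" ws] \<open>card W + 1 = length ws\<close>
      by (simp add: coprod_def)
  next
    case False
    have "coprod (mu ws) ({i}, W) =
        (-1) ^ card {w\<in>W. w < i} * ((-1) ^ card {w\<in>W. i < w} * det_pairing ws (?L @ [coord i]))"
      using False True by (simp add: coprod_def shuf_sign_singleton_left mu_insert)
    also have "\<dots> = (-1) ^ card W * det_pairing ws (?L @ [coord i])"
      using False by (simp add: card_less_plus_card_greater[of W i] flip: mult.assoc power_add)
    finally show ?thesis by simp
  qed
  have "(\<Sum>i\<in>UNIV. c i * det_pairing ws (?L @ [coord i])) = det_pairing ws (?L @ [functional c])"
    unfolding functional_eq_sum_coord by (rule det_pairing_sum_last[symmetric]) (use True in simp)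
  also have "\<dots> = 0"
    by (rule det_pairing_vanishing_last) (use True assms in simp_all)
  finally show ?thesis by (simp add: contract_fst_def term_i flip: sum_distrib_left)
qed

lemma contract_snd_coprod_mu_snoc:
  fixes vs :: "('k::field_char_0 ^ 'n::{finite,linorder}) list"
  assumes "\<And>x. x \<in> set vs \<Longrightarrow> functional c x = 0"
  shows "contract_snd c (coprod (mu (vs @ [u]))) U = functional c u * mu vs U"
proof (cases "card U = length vs")
  case False
  then have "coprod (mu (vs @ [u])) (U, {i}) = 0" for i by (auto simp: coprod_def mu_def)
  then show ?thesis using False by (simp add: contract_snd_def mu_def)
next
  case True
  let ?L = "map coord (sorted_list_of_set U)"
  have term_i: "c i * coprod (mu (vs @ [u])) (U, {i}) = c i * det_pairing (vs @ [u]) (?L @ [coord i])"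
    for i
  proof (cases "i \<in> U")
    case True
    then show ?thesis
      using det_pairing_repeated_last[of ?L "coord i" "vs @ [u]"] \<open>card U = length vs\<close>
      by (simp add: coprod_def)
  next
    case False
    then have "coprod (mu (vs @ [u])) (U, {i}) = (-1) ^ card {w\<in>U. i < w} *
        ((-1) ^ card {w\<in>U. i < w} * det_pairing (vs @ [u]) (?L @ [coord i]))"
      using True by (simp add: coprod_def shuf_sign_singleton_right mu_insert Un_commute)
    then show ?thesis by (simp flip: mult.assoc power_add)
  qed
  have "(\<Sum>i\<in>UNIV. c i * det_pairing (vs @ [u]) (?L @ [coord i])) =
      det_pairing (vs @ [u]) (?L @ [functional c])"
    unfolding functional_eq_sum_coord by (rule det_pairing_sum_last[symmetric]) (use True in simp)
  also have "\<dots> = functional c u * det_pairing vs ?L"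
    by (rule det_pairing_snoc) (use True assms in simp_all)
  finally show ?thesis using True by (simp add: contract_snd_def term_i mu_eq_det_pairing)
qed

lemma cyclic_form_contract:
  assumes "cyclic_form f"
  shows "(\<Sum>W\<in>UNIV. contract_fst c (coprod b) W * f a (basis_el W)) =
    (\<Sum>U\<in>UNIV. contract_snd c (coprod a) U * f (basis_el U) b)"
proof -
  have cyc: "(\<Sum>W\<in>UNIV. coprod b (X, W) * f a (basis_el W)) =
      (\<Sum>U\<in>UNIV. coprod a (U, X) * f (basis_el U) b)" for X
    using fun_cong[OF assms[unfolded cyclic_form_def, rule_format, of b a]] .
  have "(\<Sum>W\<in>UNIV. contract_fst c (coprod b) W * f a (basis_el W)) =
      (\<Sum>W\<in>UNIV. \<Sum>i\<in>UNIV. c i * (coprod b ({i}, W) * f a (basis_el W)))"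
    by (simp add: contract_fst_def sum_distrib_right mult.assoc)
  also have "\<dots> = (\<Sum>i\<in>UNIV. c i * (\<Sum>W\<in>UNIV. coprod b ({i}, W) * f a (basis_el W)))"
    by (subst sum.swap) (simp add: sum_distrib_left)
  also have "\<dots> = (\<Sum>i\<in>UNIV. c i * (\<Sum>U\<in>UNIV. coprod a (U, {i}) * f (basis_el U) b))"
    by (simp add: cyc)
  also have "\<dots> = (\<Sum>U\<in>UNIV. \<Sum>i\<in>UNIV. c i * (coprod a (U, {i}) * f (basis_el U) b))"
    by (subst sum.swap) (simp add: sum_distrib_left)
  also have "\<dots> = (\<Sum>U\<in>UNIV. contract_snd c (coprod a) U * f (basis_el U) b)"
    by (simp add: contract_snd_def sum_distrib_right mult.assoc)
  finally show ?thesis .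
qed

lemma exists_functional_annihilating:
  fixes X :: "('k::field ^ 'n::finite) set"
  assumes "vec.span X \<noteq> UNIV"
  obtains c u where "\<And>x. x \<in> X \<Longrightarrow> functional c x = 0" and "functional c u = 1"
proof -
  obtain u where u: "u \<notin> vec.span X" using assms by blast
  obtain B where B: "B \<subseteq> vec.span X" "vec.independent B" "vec.span X \<subseteq> vec.span B"
    using vec.maximal_independent_subset[of "vec.span X"] by blast
  have "vec.span B \<subseteq> vec.span X" using B(1) vec.span_minimal vec.subspace_span by blast
  then have uB: "u \<notin> vec.span B" using u by blast
  fix j :: 'n
  obtain g where g: "Vector_Spaces.linear (*s) (*s) g"
    "\<forall>x\<in>insert u B. g x = (if x = u then axis j (1::'k) else 0)"
    using vec.linear_independent_extend[OF vec.independent_insertI[OF uB B(2)],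
        where f="\<lambda>x. if x = u then axis j (1::'k) else 0"] by blast
  define c where "c i = g (axis i 1) $ j" for i
  have functional_c: "functional c x = g x $ j" for x
    unfolding c_def functional_def using linear_componentwise[OF g(1), of x j]
    by (simp add: mult.commute)
  have "g x = 0" if "x \<in> X" for x
  proof -
    have "x \<in> vec.span B" using that B(3) vec.span_superset by blast
    moreover have "\<And>y. y \<in> B \<Longrightarrow> g y = 0" using g(2) uB vec.span_superset by fastforce
    ultimately show ?thesis using vec.linear_eq_0_on_span[OF g(1)] by blast
  qed
  moreover have "g u = axis j 1" using g(2) by simp
  ultimately show ?thesis using that[of c u] functional_c by simp
qed

lemma bilinear_form_sum_left:
  assumes "bilinear_form f" "finite A"
  shows "f (\<lambda>S. \<Sum>U\<in>A. g U S) b = (\<Sum>U\<in>A. f (g U) b)"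
  using assms(2)
proof (induction A rule: finite_induct)
  case empty
  have "\<forall>c a b. f (\<lambda>S. c * a S) b = c * f a b"
    using assms(1) unfolding bilinear_form_def by blast
  from this[rule_format, of 0 "\<lambda>_. 0" b] show ?case by simp
next
  case (insert x F)
  have "\<forall>a a' b. f (\<lambda>S. a S + a' S) b = f a b + f a' b"
    using assms(1) unfolding bilinear_form_def by blast
  from this[rule_format, of "g x" "\<lambda>S. \<Sum>U\<in>F. g U S" b] show ?case using insert by simp
qed

lemma bilinear_form_expand_left:
  fixes f :: "('k::field, 'n::finite) coalg \<Rightarrow> ('k, 'n) coalg \<Rightarrow> 'k"
  assumes "bilinear_form f"
  shows "f a b = (\<Sum>U\<in>UNIV. a U * f (basis_el U) b)"
proof -
  have "a = (\<lambda>S. \<Sum>U\<in>UNIV. a U * basis_el U S)"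
    by (simp add: basis_el_def if_distrib cong: if_cong)
  then have "f a b = f (\<lambda>S. \<Sum>U\<in>UNIV. a U * basis_el U S) b" by simp
  also have "\<dots> = (\<Sum>U\<in>UNIV. f (\<lambda>S. a U * basis_el U S) b)"
    by (rule bilinear_form_sum_left[OF assms]) simp
  also have "\<dots> = (\<Sum>U\<in>UNIV. a U * f (basis_el U) b)"
    using assms unfolding bilinear_form_def by simp
  finally show ?thesis .
qed

theorem corollary9p3:
  fixes f :: "('k::field_char_0, 'n::{finite,linorder}) coalg \<Rightarrow> ('k, 'n) coalg \<Rightarrow> 'k"
    and d :: int
    and vs ws :: "('k ^ 'n::{finite,linorder}) list"
  assumes "symmetric_form d f"
    and "cyclic_form f"
    and "distinct vs" and "vec.independent (set vs)"
    and "distinct ws" and "vec.independent (set ws)"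
    and "vec.span (set vs \<union> set ws) \<noteq> UNIV"
  shows "f (mu vs) (mu ws) = 0"
proof -
  obtain c u where c: "\<And>x. x \<in> set vs \<union> set ws \<Longrightarrow> functional c x = 0"
    and cu: "functional c u = 1"
    using exists_functional_annihilating[OF assms(7)] by metis
  have "0 = (\<Sum>W\<in>UNIV. contract_fst c (coprod (mu ws)) W * f (mu (vs @ [u])) (basis_el W))"
    using contract_fst_coprod_mu_eq_0[of ws c] c by simp
  also have "\<dots> = (\<Sum>U\<in>UNIV. contract_snd c (coprod (mu (vs @ [u]))) U * f (basis_el U) (mu ws))"
    by (rule cyclic_form_contract[OF assms(2)])
  also have "\<dots> = (\<Sum>U\<in>UNIV. mu vs U * f (basis_el U) (mu ws))"
    using contract_snd_coprod_mu_snoc[of vs c u] c cu by simp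
  also have "\<dots> = f (mu vs) (mu ws)"
    using assms(1) bilinear_form_expand_left unfolding symmetric_form_def by metis
  finally show ?thesis by simp
qed

end
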